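(* Let $(\mathbf{L},\mathbf{R})\in\mathcal{P}_{\mathsf N}$ be centered and suppose $\mathbf{L}\preceq^{\mathrm{BC}}\mathbf{R}$, i.e. $v\mathbf{L}\preceq v\mathbf{R}$ for every $v\in\{0,1\}^{\mathsf N+1}$. Then $(\mathbf{L},\mathbf{R})$ obeys region dominance: for every nonempty $X\subseteq[\mathsf N+1]$, $\big|\bigwedge_{i\in X}\mathbf{L}_{(i)}\big|\le\big|\bigwedge_{i\in X}\mathbf{R}_{(i)}\big|$ (and the pair is balanced).
   Context: $\mathcal{P}_{\mathsf N}$ denotes the set of pairs $(\mathbf{L},\mathbf{R})$ of $(0,1)$-matrices, $\mathbf{L}$ of size $(\mathsf N+1)\times m_L$ and $\mathbf{R}$ of size $(\mathsf N+1)\times m_R$, such that some index $p\in[\mathsf N+1]$ has row $p$ of $\mathbf{L}$ and row $p$ of $\mathbf{R}$ both zero. $\mathbf{A}_{(i)}$ is the $i$-th row; $e$ the all-ones row vector; $|v|=\sum_k|v_k|$; $\wedge$ is the bitwise AND of bit strings. The pair is centered if it is balanced ($|\mathbf{L}_{(i)}|=|\mathbf{R}_{(i)}|$ for all $i$) and some row satisfies $\mathbf{L}_{(i)}=e=\mathbf{R}_{(i)}$ (so both matrices have the same number of columns). For $x,y\in\mathbb{R}^d$, $x\preceq y$ means $\sum_{n=1}^k x^\downarrow_n\le\sum_{n=1}^k y^\downarrow_n$ for $k=1,\dots,d-1$ and $\sum_{n=1}^d x_n=\sum_{n=1}^d y_n$, with $x^\downarrow_n$ the $n$-th largest component. Thus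 $\big|\bigwedge_{i\in X}\mathbf{L}_{(i)}\big|$ is the number of columns of $\mathbf{L}$ having a $1$ in every row indexed by $X$. *)

theory Defs
  imports Complex_Main
begin

text \<open>Matrices are functions from (row, column) indices to entries; rows are indexed
  by 0..N (i.e. N+1 rows), columns by 0..<m.\<close>

definition zero_one_mat :: "nat \<Rightarrow> nat \<Rightarrow> (nat \<Rightarrow> nat \<Rightarrow> nat) \<Rightarrow> bool" where
  "zero_one_mat r c A \<longleftrightarrow> (\<forall>i<r. \<forall>j<c. A i j \<in> {0, 1})"

definition in_P :: "nat \<Rightarrow> nat \<Rightarrow> nat \<Rightarrow> (nat \<Rightarrow> nat \<Rightarrow> nat) \<Rightarrow> (nat \<Rightarrow> nat \<Rightarrow> nat) \<Rightarrow> bool" where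
  "in_P N mL mR L R \<longleftrightarrow> zero_one_mat (N+1) mL L \<and> zero_one_mat (N+1) mR R \<and>
     (\<exists>p<N+1. (\<forall>j<mL. L p j = 0) \<and> (\<forall>j<mR. R p j = 0))"

definition balanced :: "nat \<Rightarrow> nat \<Rightarrow> nat \<Rightarrow> (nat \<Rightarrow> nat \<Rightarrow> nat) \<Rightarrow> (nat \<Rightarrow> nat \<Rightarrow> nat) \<Rightarrow> bool" where
  "balanced N mL mR L R \<longleftrightarrow> (\<forall>i<N+1. (\<Sum>j<mL. L i j) = (\<Sum>j<mR. R i j))"

definition centered :: "nat \<Rightarrow> nat \<Rightarrow> nat \<Rightarrow> (nat \<Rightarrow> nat \<Rightarrow> nat) \<Rightarrow> (nat \<Rightarrow> nat \<Rightarrow> nat) \<Rightarrow> bool" where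
  "centered N mL mR L R \<longleftrightarrow> mL = mR \<and> balanced N mL mR L R \<and>
     (\<exists>i<N+1. (\<forall>j<mL. L i j = 1) \<and> (\<forall>j<mR. R i j = 1))"

definition decr :: "real list \<Rightarrow> real list" where
  "decr x = rev (sort x)"

definition majorized :: "real list \<Rightarrow> real list \<Rightarrow> bool" where
  "majorized x y \<longleftrightarrow> length x = length y \<and>
     (\<forall>k\<in>{1..<length x}. sum_list (take k (decr x)) \<le> sum_list (take k (decr y))) \<and>
     sum_list x = sum_list y"

definition vec_mat :: "nat \<Rightarrow> nat \<Rightarrow> (nat \<Rightarrow> nat) \<Rightarrow> (nat \<Rightarrow> nat \<Rightarrow> nat) \<Rightarrow> real list" where
  "vec_mat N m v A = map (\<lambda>j. real (\<Sum>i<N+1. v i * A i j)) [0..<m]"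

definition BC_dominated :: "nat \<Rightarrow> nat \<Rightarrow> nat \<Rightarrow> (nat \<Rightarrow> nat \<Rightarrow> nat) \<Rightarrow> (nat \<Rightarrow> nat \<Rightarrow> nat) \<Rightarrow> bool" where
  "BC_dominated N mL mR L R \<longleftrightarrow>
     (\<forall>v. (\<forall>i<N+1. v i \<in> {0, 1}) \<longrightarrow> majorized (vec_mat N mL v L) (vec_mat N mR v R))"

definition and_rows_card :: "nat \<Rightarrow> (nat \<Rightarrow> nat \<Rightarrow> nat) \<Rightarrow> nat set \<Rightarrow> nat" where
  "and_rows_card m A X = card {j. j < m \<and> (\<forall>i\<in>X. A i j = 1)}"

definition region_dominance :: "nat \<Rightarrow> nat \<Rightarrow> nat \<Rightarrow> (nat \<Rightarrow> nat \<Rightarrow> nat) \<Rightarrow> (nat \<Rightarrow> nat \<Rightarrow> nat) \<Rightarrow> bool" where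
  "region_dominance N mL mR L R \<longleftrightarrow>
     (\<forall>X. X \<noteq> {} \<and> X \<subseteq> {0..<N+1} \<longrightarrow> and_rows_card mL L X \<le> and_rows_card mR R X)"

end

theory Submission imports Defs "HOL-Library.Multiset" begin

(* Multiplying by the indicator vector v of X turns each column of L into its number of ones
   in the rows of X. These entries are at most k = |X|, and the columns of the AND of the rows
   in X are exactly the entries equal to k. Now if x is majorized by y, all entries are at most k,
   and k occurs c times in x, then the c largest entries of y sum to at least c k, so all of them
   equal k. Hence k occurs in vR at least as often as in vL. *)

lemma count_list_decr: "count_list (decr x) k = count_list x k"
  unfolding decr_def by (metis count_list_rev count_mset mset_sort)

lemma length_decr: "length (decr x) = length x"
  unfolding decr_def by simp

lemma sum_list_decr: "sum_list (decr x) = sum_list x"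
  unfolding decr_def by (metis mset_rev mset_sort sum_mset_sum_list)

lemma take_count_list_eq_replicate:
  fixes xs :: "real list"
  assumes "sorted_wrt (\<ge>) xs" and "\<forall>z\<in>set xs. z \<le> k"
  shows "take (count_list xs k) xs = replicate (count_list xs k) k"
  using assms
proof (induction xs)
  case Nil
  then show ?case by simp
next
  case (Cons a xs)
  show ?case
  proof (cases "a = k")
    case True
    then show ?thesis using Cons by simp
  next
    case False
    with Cons.prems have "k \<notin> set xs" by fastforce
    then have "count_list xs k = 0" by simp
    then show ?thesis using False by simp
  qed
qed

lemma sum_list_take_count_decr:
  fixes x :: "real list"
  assumes "\<forall>z\<in>set x. z \<le> k"
  shows "sum_list (take (count_list x k) (decr x)) = real (count_list x k) * k"
proof -
  have "sorted_wrt (\<ge>) (decr x)"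
    unfolding decr_def by (simp add: sorted_wrt_rev)
  moreover have "\<forall>z\<in>set (decr x). z \<le> k"
    using assms unfolding decr_def by simp
  ultimately show ?thesis
    using take_count_list_eq_replicate[of "decr x" k]
    by (simp add: count_list_decr sum_list_replicate)
qed

lemma all_eq_bound_if_sum_list_ge:
  fixes xs :: "real list"
  assumes "\<forall>z\<in>set xs. z \<le> k" and "real (length xs) * k \<le> sum_list xs"
  shows "\<forall>z\<in>set xs. z = k"
  using assms
proof (induction xs)
  case Nil
  then show ?case by simp
next
  case (Cons a xs)
  have "sum_list xs \<le> real (length xs) * k"
    using sum_list_mono[of xs id "\<lambda>_. k"] Cons.prems(1) by (simp add: sum_list_triv)
  with Cons.prems have "a = k" and "real (length xs) * k \<le> sum_list xs"
    by (auto simp: algebra_simps)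
  then show ?case using Cons by simp
qed

lemma majorized_take_sum_list_le:
  assumes "majorized x y" and "a \<le> length x"
  shows "sum_list (take a (decr x)) \<le> sum_list (take a (decr y))"
proof -
  consider "a = 0" | "a = length x" | "a \<in> {1..<length x}"
    using assms(2) by fastforce
  then show ?thesis
  proof cases
    case 2
    then show ?thesis
      using assms(1) unfolding majorized_def by (simp add: length_decr sum_list_decr)
  qed (use assms(1) in \<open>auto simp: majorized_def\<close>)
qed

lemma majorized_count_list_bound_le:
  fixes x y :: "real list"
  assumes maj: "majorized x y"
    and x_le: "\<forall>z\<in>set x. z \<le> k" and y_le: "\<forall>z\<in>set y. z \<le> k"
  shows "count_list x k \<le> count_list y k"
proof -
  define c where "c = count_list x k"
  define t where "t = take c (decr y)"
  have c_le: "c \<le> length x"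
    unfolding c_def by (rule count_le_length)
  then have length_t: "length t = c"
    using maj unfolding t_def majorized_def by (simp add: length_decr)
  have t_le: "\<forall>z\<in>set t. z \<le> k"
    using y_le unfolding t_def decr_def by (auto dest: in_set_takeD)
  have "real c * k \<le> sum_list t"
    using majorized_take_sum_list_le[OF maj c_le] sum_list_take_count_decr[OF x_le]
    unfolding c_def t_def by simp
  then have "\<forall>z\<in>set t. z = k"
    using all_eq_bound_if_sum_list_ge[OF t_le] length_t by simp
  then have "c = count_list t k"
    using length_t by (simp add: count_list_eq_length_filter filter_id_conv)
  also have "\<dots> \<le> count_list (decr y) k"
    unfolding t_def by (metis append_take_drop_id count_list_append le_add1)
  finally show ?thesis
    unfolding c_def by (simp add: count_list_decr)
qed

lemma vec_mat_indicator:
  assumes "X \<subseteq> {0..<N+1}"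
  shows "vec_mat N m (\<lambda>i. if i \<in> X then 1 else 0) A = map (\<lambda>j. real (\<Sum>i\<in>X. A i j)) [0..<m]"
proof -
  have "(\<Sum>i<N+1. (if i \<in> X then 1 else 0) * A i j) = (\<Sum>i\<in>X. A i j)" for j
  proof -
    have "(\<Sum>i<N+1. (if i \<in> X then 1 else 0) * A i j) = (\<Sum>i<N+1. if i \<in> X then A i j else 0)"
      by (intro sum.cong) auto
    also have "\<dots> = (\<Sum>i\<in>{..<N+1} \<inter> X. A i j)"
      by (simp add: sum.inter_restrict)
    also have "{..<N+1} \<inter> X = X"
      using assms by auto
    finally show ?thesis .
  qed
  then show ?thesis
    unfolding vec_mat_def by simp
qed

lemma sum_zero_one_le_card:
  fixes f :: "'a \<Rightarrow> nat"
  assumes "\<forall>i\<in>X. f i \<in> {0, 1}"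
  shows "sum f X \<le> card X"
  using sum_bounded_above[of X f 1] assms by fastforce

lemma sum_zero_one_eq_card_iff:
  fixes f :: "'a \<Rightarrow> nat"
  assumes "finite X" and "\<forall>i\<in>X. f i \<in> {0, 1}"
  shows "sum f X = card X \<longleftrightarrow> (\<forall>i\<in>X. f i = 1)"
proof
  assume sum_eq: "sum f X = card X"
  show "\<forall>i\<in>X. f i = 1"
  proof (rule ccontr)
    assume "\<not> (\<forall>i\<in>X. f i = 1)"
    then obtain i0 where "i0 \<in> X" "f i0 < 1"
      using assms(2) by force
    then have "sum f X < (\<Sum>i\<in>X. 1)"
      using sum_strict_mono_ex1[OF assms(1), of f "\<lambda>_. 1"] assms(2) by fastforce
    then show False
      using sum_eq by simp
  qed
qed simp

context
  fixes N m :: nat and A :: "nat \<Rightarrow> nat \<Rightarrow> nat" and X :: "nat set"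
  assumes zero_one: "zero_one_mat (N+1) m A" and X_rows: "X \<subseteq> {0..<N+1}"
begin

private lemma entries_zero_one: "\<forall>i\<in>X. A i j \<in> {0, 1}" if "j < m"
  using zero_one X_rows that unfolding zero_one_mat_def by (auto simp: subset_iff)

lemma vec_mat_indicator_le_card:
  "\<forall>z\<in>set (vec_mat N m (\<lambda>i. if i \<in> X then 1 else 0) A). z \<le> real (card X)"
  using sum_zero_one_le_card[OF entries_zero_one]
  by (auto simp: vec_mat_indicator[OF X_rows] simp flip: of_nat_sum)

lemma count_list_vec_mat_indicator:
  "count_list (vec_mat N m (\<lambda>i. if i \<in> X then 1 else 0) A) (real (card X)) = and_rows_card m A X"
proof -
  have "finite X"
    using X_rows finite_subset by blast
  have "count_list (vec_mat N m (\<lambda>i. if i \<in> X then 1 else 0) A) (real (card X))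
      = card {j. j < m \<and> (\<Sum>i\<in>X. A i j) = card X}"
    unfolding vec_mat_indicator[OF X_rows] count_list_eq_length_filter length_filter_conv_card
    by (intro arg_cong[where f = card]) (auto simp flip: of_nat_sum)
  also have "\<dots> = and_rows_card m A X"
    unfolding and_rows_card_def
    using sum_zero_one_eq_card_iff[OF \<open>finite X\<close> entries_zero_one] by metis
  finally show ?thesis .
qed

end

theorem theorem4:
  fixes N mL mR :: nat and L R :: "nat \<Rightarrow> nat \<Rightarrow> nat"
  assumes "in_P N mL mR L R"
    and "centered N mL mR L R"
    and "BC_dominated N mL mR L R"
  shows "region_dominance N mL mR L R \<and> balanced N mL mR L R"
proof
  show "balanced N mL mR L R"
    using assms(2) unfolding centered_def by blast
  have L01: "zero_one_mat (N+1) mL L" and R01: "zero_one_mat (N+1) mR R"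
    using assms(1) unfolding in_P_def by auto
  show "region_dominance N mL mR L R"
    unfolding region_dominance_def
  proof (intro allI impI)
    fix X :: "nat set"
    assume "X \<noteq> {} \<and> X \<subseteq> {0..<N+1}"
    then have X_rows: "X \<subseteq> {0..<N+1}" by simp
    let ?v = "\<lambda>i. if i \<in> X then 1 else 0 :: nat"
    have "majorized (vec_mat N mL ?v L) (vec_mat N mR ?v R)"
      using assms(3) unfolding BC_dominated_def by simp
    then have "count_list (vec_mat N mL ?v L) (card X) \<le> count_list (vec_mat N mR ?v R) (card X)"
      using majorized_count_list_bound_le
        vec_mat_indicator_le_card[OF L01 X_rows] vec_mat_indicator_le_card[OF R01 X_rows]
      by blast
    then show "and_rows_card mL L X \<le> and_rows_card mR R X"
      by (simp only: count_list_vec_mat_indicator[OF L01 X_rows] count_list_vec_mat_indicator[OF R01 X_rows])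
  qed
qed

end
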